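(* (1) If $(\alpha^*,u^* )$ is an inverse Stackelberg solution, then with $u_0^*=\alpha^*[u^*]$ the pair $(u_0^*,u^* )$ belongs to $\mathcal{B}$ and maximizes $J_0$ over $\mathcal{B}$. (2) If $(u_0^*,u^* )\in\mathcal{B}$ maximizes $J_0$ over $\mathcal{B}$, then there exists an incentive strategy $\alpha^*$ with $\alpha^*[u^*]=u_0^*$ such that $(\alpha^*,u^* )$ is an inverse Stackelberg solution. (3) Suppose in addition that each $P_i$, $i=1,\dots,n$, is a nonempty convex compact subset of a Euclidean space and that for every $i=1,\dots,n$, every $u_0\in P_0$ and every $u_{-i}$, the function $u_i'\mapsto J_i(u_0,u_i',u_{-i})$ is quasiconcave on $P_i$. Then there exists at least one inverse Stackelberg solution.
   Context: Static game with a leader (player $0$) and followers $1,\dots,n$. Each $P_i$ ($i=0,\dots,n$) is a nonempty compact metric space and each payoff $J_i:P_0\times P_1\times\dots\times P_n\to\mathbb{R}$ ($i=0,\dots,n$) is continuous; each player maximizes. Let $P=P_1\times\dots\times P_n$; elements $u=(u_1,\dots,u_n)\in P$ are profiles of followers' strategies, and for $u_i'\in P_i$, $(u_i',u_{-i})$ denotes $u$ with the $i$-th component replaced by $u_i'$. Write $J_i(u_0,u)=J_i(u_0,u_1,\dots,u_n)$. An incentive strategy of the leader is an arbitrary map $\alpha:P\to P_0$. The set of followers' Nash equilibria against $\alpha$ is $\mathcal{E}(\alpha)=\{u\in P: J_i(\alpha[u],u)\ge J_i(\alpha[(u_i',u_{-i})],(u_i',u_{-i}))\ \text{for all } i=1,\dots,n,\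 u_i'\in P_i\}$. A pair $(\alpha^*,u^* )$ is an inverse Stackelberg solution if $u^*\in\mathcal{E}(\alpha^* )$ and $J_0(\alpha^*[u^*],u^* )=\sup_{\alpha}\sup_{u\in\mathcal{E}(\alpha)}J_0(\alpha[u],u)$ (supremum over all incentive strategies, $\sup\emptyset=-\infty$). Define $\mathcal{B}=\{(u_0,u)\in P_0\times P: J_i(u_0,u)\ge\max_{u_i'\in P_i}\min_{u_0'\in P_0}J_i(u_0',u_i',u_{-i})\ \text{for } i=1,\dots,n\}$. *)

theory Defs
  imports "HOL-Analysis.Analysis"
begin

text \<open>Followers are indexed by 1..n; the leader by 0. A profile of followers'
strategies is an extensional function on {1..n}; the i-th component of u is u i,
and (u_i', u_{-i}) is written u(i := v).\<close>

definition profiles :: "nat \<Rightarrow> (nat \<Rightarrow> 'b set) \<Rightarrow> (nat \<Rightarrow> 'b) set" where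
  "profiles n P = PiE {1..n} P"

definition game :: "nat \<Rightarrow> 'a::metric_space set \<Rightarrow> (nat \<Rightarrow> 'b::metric_space set)
    \<Rightarrow> (nat \<Rightarrow> 'a \<Rightarrow> (nat \<Rightarrow> 'b) \<Rightarrow> real) \<Rightarrow> bool" where
  "game n P0 P J \<longleftrightarrow> 1 \<le> n \<and> P0 \<noteq> {} \<and> compact P0 \<and>
     (\<forall>i\<in>{1..n}. P i \<noteq> {} \<and> compact (P i)) \<and>
     (\<forall>i\<in>{0..n}. continuous_on (P0 \<times> profiles n P) (\<lambda>(u0, u). J i u0 u))"

definition incentive :: "nat \<Rightarrow> 'a set \<Rightarrow> (nat \<Rightarrow> 'b set) \<Rightarrow> ((nat \<Rightarrow> 'b) \<Rightarrow> 'a) \<Rightarrow> bool" where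
  "incentive n P0 P \<alpha> \<longleftrightarrow> \<alpha> \<in> profiles n P \<rightarrow> P0"

definition NashSet :: "nat \<Rightarrow> (nat \<Rightarrow> 'b set) \<Rightarrow> (nat \<Rightarrow> 'a \<Rightarrow> (nat \<Rightarrow> 'b) \<Rightarrow> real)
    \<Rightarrow> ((nat \<Rightarrow> 'b) \<Rightarrow> 'a) \<Rightarrow> (nat \<Rightarrow> 'b) set" where
  "NashSet n P J \<alpha> = {u \<in> profiles n P. \<forall>i\<in>{1..n}. \<forall>v\<in>P i.
       J i (\<alpha> u) u \<ge> J i (\<alpha> (u(i := v))) (u(i := v))}"

definition inv_stackelberg :: "nat \<Rightarrow> 'a set \<Rightarrow> (nat \<Rightarrow> 'b set)
    \<Rightarrow> (nat \<Rightarrow> 'a \<Rightarrow> (nat \<Rightarrow> 'b) \<Rightarrow> real) \<Rightarrow> ((nat \<Rightarrow> 'b) \<Rightarrow> 'a) \<Rightarrow> (nat \<Rightarrow> 'b) \<Rightarrow> bool" where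
  "inv_stackelberg n P0 P J \<alpha> u \<longleftrightarrow> incentive n P0 P \<alpha> \<and> u \<in> NashSet n P J \<alpha> \<and>
     ereal (J 0 (\<alpha> u) u) =
       (SUP \<beta>\<in>{\<beta>. incentive n P0 P \<beta>}. SUP w\<in>NashSet n P J \<beta>. ereal (J 0 (\<beta> w) w))"

definition Bset :: "nat \<Rightarrow> 'a set \<Rightarrow> (nat \<Rightarrow> 'b set)
    \<Rightarrow> (nat \<Rightarrow> 'a \<Rightarrow> (nat \<Rightarrow> 'b) \<Rightarrow> real) \<Rightarrow> ('a \<times> (nat \<Rightarrow> 'b)) set" where
  "Bset n P0 P J = {(u0, u). u0 \<in> P0 \<and> u \<in> profiles n P \<and>
     (\<forall>i\<in>{1..n}. J i u0 u \<ge> (SUP v\<in>P i. INF w\<in>P0. J i w (u(i := v))))}"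

definition maximizes_on_B where
  "maximizes_on_B n P0 P J u0 u \<longleftrightarrow> (u0, u) \<in> Bset n P0 P J \<and>
     (\<forall>(w0, w)\<in>Bset n P0 P J. J 0 w0 w \<le> J 0 u0 u)"

definition quasiconcave_on :: "'c::real_vector set \<Rightarrow> ('c \<Rightarrow> real) \<Rightarrow> bool" where
  "quasiconcave_on S f \<longleftrightarrow> (\<forall>x\<in>S. \<forall>y\<in>S. \<forall>t\<in>{0..1}.
     min (f x) (f y) \<le> f ((1 - t) *\<^sub>R x + t *\<^sub>R y))"

end

theory Submission
  imports Defs
begin

text \<open>A leader who may condition on the followers' profile can answer a unilateral deviation of
  follower \<open>i\<close> by an action minimizing \<open>J\<^sub>i\<close>. This threat holds \<open>i\<close> to its max-min payoff, so a pair
  \<open>(u\<^sub>0, u)\<close> is enforceable as a followers' equilibrium exactly when it lies in \<open>\<B>\<close>; the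
  leader's optimal value is therefore the maximum of \<open>J\<^sub>0\<close> over \<open>\<B>\<close>, which gives (1) and (2).

  For (3), \<open>\<B>\<close> is compact, and it is nonempty because for any fixed leader action a Nash
  equilibrium of the followers' game lies in \<open>\<B>\<close>. That equilibrium is obtained as a limit of
  \<open>\<epsilon>\<close>-equilibria: best replies at a profile stay \<open>\<epsilon>\<close>-optimal nearby, a partition of unity
  over a finite cover together with Brouwer's theorem yields a profile that is a convex
  combination of such replies, and quasiconcavity makes it \<open>\<epsilon>\<close>-optimal. The simplex there has
  a dimension that depends on the cover, so Brouwer's theorem is derived from Kuhn's lemma on
  the cube \<open>[0,1]\<^sup>n\<close> embedded in \<open>nat \<Rightarrow> real\<close> rather than taken for a Euclidean type.\<close>

lemma tendsto_fun_iff: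
  fixes f :: "'x \<Rightarrow> 'i \<Rightarrow> 'b::topological_space"
  shows "(f \<longlongrightarrow> l) F \<longleftrightarrow> (\<forall>i. ((\<lambda>c. f c i) \<longlongrightarrow> l i) F)"
proof -
  have "(f \<longlongrightarrow> l) F \<longleftrightarrow> limitin (product_topology (\<lambda>i. euclidean) UNIV) f l F"
    by (simp add: euclidean_product_topology)
  then show ?thesis
    by (simp add: limitin_componentwise)
qed

lemma continuous_on_coordinate [continuous_intros]:
  "continuous_on S (\<lambda>x::'i \<Rightarrow> 'b::topological_space. x i)"
  by (rule continuous_on_subset[OF continuous_on_product_coordinates]) simp

lemma continuous_on_fun_upd [continuous_intros]:
  fixes h :: "'x::topological_space \<Rightarrow> 'i \<Rightarrow> 'b::topological_space"
  assumes "continuous_on S g" "continuous_on S h"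
  shows "continuous_on S (\<lambda>x. (h x)(i := g x))"
proof (rule continuous_on_coordinatewise_then_product)
  fix j
  show "continuous_on S (\<lambda>x. ((h x)(i := g x)) j)"
    using assms continuous_on_product_then_coordinatewise[OF assms(2), of j] by (cases "j = i") simp_all
qed

lemma LIMSEQ_coordinatewise_close:
  fixes Z W :: "nat \<Rightarrow> 'i \<Rightarrow> real"
  assumes "Z \<longlonglongrightarrow> z" "e \<longlonglongrightarrow> 0" "\<And>k j. \<bar>W k j - Z k j\<bar> \<le> e k"
  shows "W \<longlonglongrightarrow> z"
  unfolding tendsto_fun_iff
proof
  fix j
  have "(\<lambda>k. W k j - Z k j) \<longlonglongrightarrow> 0"
    by (rule Lim_null_comparison[OF _ assms(2)]) (simp add: assms(3) always_eventually)
  from tendsto_add[OF this assms(1)[unfolded tendsto_fun_iff, rule_format, of j]]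
  show "(\<lambda>k. W k j) \<longlonglongrightarrow> z j" by simp
qed

lemma LIMSEQ_inverse_Suc_subseq:
  assumes "strict_mono \<sigma>"
  shows "(\<lambda>k. 1 / real (Suc (\<sigma> k))) \<longlonglongrightarrow> 0"
  using LIMSEQ_subseq_LIMSEQ[OF LIMSEQ_inverse_real_of_nat assms]
  by (simp add: o_def inverse_eq_divide)

definition unit_cube :: "nat \<Rightarrow> (nat \<Rightarrow> real) set" where
  "unit_cube n = {x. (\<forall>i<n. 0 \<le> x i \<and> x i \<le> 1) \<and> (\<forall>i\<ge>n. x i = 0)}"

lemma compact_unit_cube: "compact (unit_cube n)"
proof -
  have "unit_cube n = PiE UNIV (\<lambda>i. if i < n then {0..1} else {0})"
    by (auto simp: unit_cube_def PiE_def Pi_def not_less)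
  moreover have "compactin (product_topology (\<lambda>i. euclidean) UNIV)
      (PiE UNIV (\<lambda>i. if i < n then {0..1::real} else {0}))"
    by (subst compactin_PiE) auto
  ultimately show ?thesis by (simp add: euclidean_product_topology)
qed

lemma kuhn_unit_cube:
  fixes label :: "(nat \<Rightarrow> real) \<Rightarrow> nat \<Rightarrow> nat" and p :: nat
  assumes p: "0 < p"
    and label01: "\<And>x i. x \<in> unit_cube n \<Longrightarrow> i < n \<Longrightarrow> label x i = 0 \<or> label x i = 1"
    and label0: "\<And>x i. x \<in> unit_cube n \<Longrightarrow> i < n \<Longrightarrow> x i = 0 \<Longrightarrow> label x i = 0"
    and label1: "\<And>x i. x \<in> unit_cube n \<Longrightarrow> i < n \<Longrightarrow> x i = 1 \<Longrightarrow> label x i = 1"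
  obtains z where "z \<in> unit_cube n"
    and "\<And>i. i < n \<Longrightarrow> \<exists>r\<in>unit_cube n. \<exists>s\<in>unit_cube n.
           (\<forall>j. \<bar>r j - z j\<bar> \<le> 1 / real p) \<and> (\<forall>j. \<bar>s j - z j\<bar> \<le> 1 / real p) \<and> label r i \<noteq> label s i"
proof -
  define grid :: "(nat \<Rightarrow> nat) \<Rightarrow> nat \<Rightarrow> real" where
    "grid q = (\<lambda>k. if k < n then real (q k) / real p else 0)" for q
  have grid_cube: "grid q \<in> unit_cube n" if "\<forall>i<n. q i \<le> p" for q
    using that p by (auto simp: unit_cube_def grid_def divide_le_eq_1)
  have kuhn01: "\<forall>q. (\<forall>i<n. q i \<le> p) \<longrightarrow> (\<forall>i<n. label (grid q) i = 0 \<or> label (grid q) i = 1)"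
    using grid_cube label01 by blast
  have kuhn0: "\<forall>q. (\<forall>i<n. q i \<le> p) \<longrightarrow> (\<forall>i<n. q i = 0 \<longrightarrow> label (grid q) i = 0)"
    using grid_cube label0 by (auto simp: grid_def)
  have kuhn1: "\<forall>q. (\<forall>i<n. q i \<le> p) \<longrightarrow> (\<forall>i<n. q i = p \<longrightarrow> label (grid q) i = 1)"
    using grid_cube label1 p by (auto simp: grid_def)
  obtain q where q: "\<forall>i<n. q i < p"
    "\<forall>i<n. \<exists>r s. (\<forall>j<n. q j \<le> r j \<and> r j \<le> q j + 1) \<and> (\<forall>j<n. q j \<le> s j \<and> s j \<le> q j + 1)
         \<and> label (grid r) i \<noteq> label (grid s) i"
    by (rule kuhn_lemma[OF p kuhn01 kuhn0 kuhn1])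
  have near: "grid r \<in> unit_cube n \<and> (\<forall>j. \<bar>grid r j - grid q j\<bar> \<le> 1 / real p)"
    if r: "\<forall>j<n. q j \<le> r j \<and> r j \<le> q j + 1" for r
  proof (intro conjI allI)
    have "\<forall>i<n. r i \<le> p"
      using r q(1) by (metis Suc_eq_plus1 Suc_leI le_trans)
    then show "grid r \<in> unit_cube n" by (rule grid_cube)
    fix j
    show "\<bar>grid r j - grid q j\<bar> \<le> 1 / real p"
    proof (cases "j < n")
      case True
      then have "\<bar>real (r j) - real (q j)\<bar> \<le> 1" using r by auto
      then have "\<bar>real (r j) - real (q j)\<bar> / real p \<le> 1 / real p"
        by (rule divide_right_mono) simp
      then show ?thesis using True by (simp add: grid_def diff_divide_distrib[symmetric])
    qed (simp add: grid_def)
  qed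
  show thesis
  proof
    show "grid q \<in> unit_cube n" using q(1) by (auto intro!: grid_cube less_imp_le)
    fix i assume "i < n"
    then obtain r s where "\<forall>j<n. q j \<le> r j \<and> r j \<le> q j + 1" "\<forall>j<n. q j \<le> s j \<and> s j \<le> q j + 1"
      "label (grid r) i \<noteq> label (grid s) i" using q(2) by blast
    then show "\<exists>r\<in>unit_cube n. \<exists>s\<in>unit_cube n. (\<forall>j. \<bar>r j - grid q j\<bar> \<le> 1 / real p) \<and>
        (\<forall>j. \<bar>s j - grid q j\<bar> \<le> 1 / real p) \<and> label r i \<noteq> label s i"
      using near by blast
  qed
qed

lemma unit_cube_displacement_small:
  fixes p :: nat
  assumes maps: "f ` unit_cube n \<subseteq> unit_cube n" and p: "0 < p"
  obtains z where "z \<in> unit_cube n"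
    and "\<forall>i<n. \<exists>r\<in>unit_cube n. \<exists>s\<in>unit_cube n.
           (\<forall>j. \<bar>r j - z j\<bar> \<le> 1 / real p) \<and> (\<forall>j. \<bar>s j - z j\<bar> \<le> 1 / real p) \<and>
           \<bar>f r i - r i\<bar> \<le> \<bar>f s i - f r i\<bar> + \<bar>s i - r i\<bar>"
proof -
  let ?C = "unit_cube n"
  have f01: "0 \<le> f x i \<and> f x i \<le> 1" if "x \<in> ?C" "i < n" for x i
    using maps that by (auto simp: unit_cube_def)
  \<comment> \<open>the label records the sign of \<open>f x i - x i\<close>; a label change between \<open>r\<close> and \<open>s\<close> bounds it\<close>
  define label :: "(nat \<Rightarrow> real) \<Rightarrow> nat \<Rightarrow> nat" where
    "label x i = (if x i = 0 then 0 else if x i = 1 then 1 else if x i \<le> f x i then 0 else 1)" for x i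
  have label0_le: "x i \<le> f x i" if "x \<in> ?C" "i < n" "label x i = 0" for x i
    using that f01[OF that(1,2)] by (auto simp: label_def split: if_splits)
  have label1_ge: "f x i \<le> x i" if "x \<in> ?C" "i < n" "label x i \<noteq> 0" for x i
    using that f01[OF that(1,2)] by (auto simp: label_def split: if_splits)
  have label_change: "\<bar>f x i - x i\<bar> \<le> \<bar>f y i - f x i\<bar> + \<bar>y i - x i\<bar>"
    if "x \<in> ?C" "y \<in> ?C" "i < n" "label x i \<noteq> label y i" for x y i
    using label0_le[of x i] label1_ge[of x i] label0_le[of y i] label1_ge[of y i] that
    by (cases "label x i = 0") (auto simp: abs_le_iff label_def split: if_splits)
  obtain z where z: "z \<in> ?C" "\<And>i. i < n \<Longrightarrow> \<exists>r\<in>?C. \<exists>s\<in>?C. (\<forall>j. \<bar>r j - z j\<bar> \<le> 1 / real p) \<and>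
        (\<forall>j. \<bar>s j - z j\<bar> \<le> 1 / real p) \<and> label r i \<noteq> label s i"
    by (rule kuhn_unit_cube[of p n label]) (use p in \<open>auto simp: label_def\<close>)
  show thesis
  proof (rule that[OF z(1)], intro allI impI)
    fix i assume i: "i < n"
    then obtain r s where rs: "r \<in> ?C" "s \<in> ?C" "\<forall>j. \<bar>r j - z j\<bar> \<le> 1 / real p"
      "\<forall>j. \<bar>s j - z j\<bar> \<le> 1 / real p" "label r i \<noteq> label s i"
      using z(2) by blast
    then show "\<exists>r\<in>?C. \<exists>s\<in>?C. (\<forall>j. \<bar>r j - z j\<bar> \<le> 1 / real p) \<and> (\<forall>j. \<bar>s j - z j\<bar> \<le> 1 / real p) \<and>
        \<bar>f r i - r i\<bar> \<le> \<bar>f s i - f r i\<bar> + \<bar>s i - r i\<bar>"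
      using label_change[OF rs(1,2) i rs(5)] by blast
  qed
qed

theorem brouwer_unit_cube:
  assumes cont: "continuous_on (unit_cube n) f" and maps: "f ` unit_cube n \<subseteq> unit_cube n"
  shows "\<exists>x\<in>unit_cube n. f x = x"
proof -
  let ?C = "unit_cube n"
  have "\<exists>z\<in>?C. \<forall>i<n. \<exists>r\<in>?C. \<exists>s\<in>?C. (\<forall>j. \<bar>r j - z j\<bar> \<le> 1 / real (Suc k)) \<and>
          (\<forall>j. \<bar>s j - z j\<bar> \<le> 1 / real (Suc k)) \<and> \<bar>f r i - r i\<bar> \<le> \<bar>f s i - f r i\<bar> + \<bar>s i - r i\<bar>" for k
  proof -
    obtain z where "z \<in> ?C" "\<forall>i<n. \<exists>r\<in>?C. \<exists>s\<in>?C. (\<forall>j. \<bar>r j - z j\<bar> \<le> 1 / real (Suc k)) \<and>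
          (\<forall>j. \<bar>s j - z j\<bar> \<le> 1 / real (Suc k)) \<and> \<bar>f r i - r i\<bar> \<le> \<bar>f s i - f r i\<bar> + \<bar>s i - r i\<bar>"
      by (rule unit_cube_displacement_small[OF maps, of "Suc k"]) simp
    then show ?thesis by blast
  qed
  then obtain Z where Z: "\<And>k. Z k \<in> ?C"
    "\<And>k i. i < n \<Longrightarrow> \<exists>r\<in>?C. \<exists>s\<in>?C. (\<forall>j. \<bar>r j - Z k j\<bar> \<le> 1 / real (Suc k)) \<and>
          (\<forall>j. \<bar>s j - Z k j\<bar> \<le> 1 / real (Suc k)) \<and> \<bar>f r i - r i\<bar> \<le> \<bar>f s i - f r i\<bar> + \<bar>s i - r i\<bar>"
    by metis
  obtain z \<sigma> where z: "z \<in> ?C" "strict_mono \<sigma>" "(Z \<circ> \<sigma>) \<longlonglongrightarrow> z"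
    using compact_imp_seq_compact[OF compact_unit_cube] Z(1) seq_compactE by metis
  have "f z i = z i" if i: "i < n" for i
  proof -
    obtain R S where R: "\<And>k. R k \<in> ?C" "\<And>k j. \<bar>R k j - Z k j\<bar> \<le> 1 / real (Suc k)"
      and S: "\<And>k. S k \<in> ?C" "\<And>k j. \<bar>S k j - Z k j\<bar> \<le> 1 / real (Suc k)"
      and RS: "\<And>k. \<bar>f (R k) i - R k i\<bar> \<le> \<bar>f (S k) i - f (R k) i\<bar> + \<bar>S k i - R k i\<bar>"
      using Z(2)[OF i] by metis
    have "(R \<circ> \<sigma>) \<longlonglongrightarrow> z" "(S \<circ> \<sigma>) \<longlonglongrightarrow> z"
      using LIMSEQ_coordinatewise_close[OF z(3) LIMSEQ_inverse_Suc_subseq[OF z(2)]] R(2) S(2) by auto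
    then have "(f \<circ> R \<circ> \<sigma>) \<longlonglongrightarrow> f z" "(f \<circ> S \<circ> \<sigma>) \<longlonglongrightarrow> f z"
      by (auto simp: o_def R(1) S(1) always_eventually intro!: continuous_on_tendsto_compose[OF cont _ z(1)])
    note lim = this \<open>(R \<circ> \<sigma>) \<longlonglongrightarrow> z\<close> \<open>(S \<circ> \<sigma>) \<longlonglongrightarrow> z\<close>
    have "(\<lambda>k. \<bar>f (R (\<sigma> k)) i - R (\<sigma> k) i\<bar>) \<longlonglongrightarrow> \<bar>f z i - z i\<bar>"
      "(\<lambda>k. \<bar>f (S (\<sigma> k)) i - f (R (\<sigma> k)) i\<bar> + \<bar>S (\<sigma> k) i - R (\<sigma> k) i\<bar>) \<longlonglongrightarrow> \<bar>f z i - f z i\<bar> + \<bar>z i - z i\<bar>"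
      by (intro tendsto_intros; use lim in \<open>simp add: tendsto_fun_iff o_def\<close>)+
    then have "\<bar>f z i - z i\<bar> \<le> \<bar>f z i - f z i\<bar> + \<bar>z i - z i\<bar>"
      by (rule LIMSEQ_le) (use RS in blast)
    then show ?thesis by simp
  qed
  moreover have "f z i = z i" if "n \<le> i" for i
    using that z(1) maps by (auto simp: unit_cube_def)
  ultimately have "f z = z" by (meson not_le ext)
  with z(1) show ?thesis by blast
qed

lemma continuous_on_INF_SUP_compact:
  fixes F :: "'a::metric_space \<times> 'x::metric_space \<Rightarrow> real"
  assumes A: "compact A" "A \<noteq> {}" and X: "compact X" and F: "continuous_on (A \<times> X) F"
  shows "continuous_on X (\<lambda>x. INF a\<in>A. F (a, x))" and "continuous_on X (\<lambda>x. SUP a\<in>A. F (a, x))"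
proof -
  have uc: "uniformly_continuous_on (A \<times> X) F"
    by (intro compact_uniformly_continuous F compact_Times A X)
  have "bounded (F ` (A \<times> X))"
    by (intro compact_imp_bounded compact_continuous_image F compact_Times A X)
  then obtain B where B: "\<And>p. p \<in> A \<times> X \<Longrightarrow> \<bar>F p\<bar> \<le> B"
    unfolding bounded_real by blast
  have bdd: "bdd_below ((\<lambda>a. F (a, x)) ` A)" "bdd_above ((\<lambda>a. F (a, x)) ` A)" if "x \<in> X" for x
    using B that by (force intro!: bdd_belowI2[of _ "-B"] bdd_aboveI2[of _ _ B] simp: abs_le_iff)+
  have close: "\<exists>d>0. \<forall>x\<in>X. \<forall>x'\<in>X. dist x' x < d \<longrightarrow>
      dist (INF a\<in>A. F (a, x')) (INF a\<in>A. F (a, x)) < e \<and> dist (SUP a\<in>A. F (a, x')) (SUP a\<in>A. F (a, x)) < e"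
    if "e > 0" for e
  proof -
    obtain d where d: "d > 0" "\<And>p p'. p \<in> A \<times> X \<Longrightarrow> p' \<in> A \<times> X \<Longrightarrow> dist p' p < d \<Longrightarrow> dist (F p') (F p) < e / 2"
      using uc[unfolded uniformly_continuous_on_def, rule_format, of "e / 2"] \<open>e > 0\<close> by auto
    show ?thesis
    proof (intro exI[of _ d] conjI ballI impI d(1))
      fix x x' assume xx: "x \<in> X" "x' \<in> X" "dist x' x < d"
      have near: "\<bar>F (a, x') - F (a, x)\<bar> < e / 2" if "a \<in> A" for a
        using d(2)[of "(a, x)" "(a, x')"] xx that by (simp add: dist_Pair_Pair dist_real_def)
      have "(INF a\<in>A. F (a, x')) - e / 2 \<le> (INF a\<in>A. F (a, x))"
        by (rule cINF_greatest[OF A(2)]) (smt (verit) cINF_lower[OF bdd(1)[OF xx(2)]] near)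
      moreover have "(INF a\<in>A. F (a, x)) - e / 2 \<le> (INF a\<in>A. F (a, x'))"
        by (rule cINF_greatest[OF A(2)]) (smt (verit) cINF_lower[OF bdd(1)[OF xx(1)]] near)
      ultimately show "dist (INF a\<in>A. F (a, x')) (INF a\<in>A. F (a, x)) < e"
        using \<open>e > 0\<close> by (simp add: dist_real_def)
      have "(SUP a\<in>A. F (a, x')) \<le> (SUP a\<in>A. F (a, x)) + e / 2"
        by (rule cSUP_least[OF A(2)]) (smt (verit) cSUP_upper[OF _ bdd(2)[OF xx(1)]] near)
      moreover have "(SUP a\<in>A. F (a, x)) \<le> (SUP a\<in>A. F (a, x')) + e / 2"
        by (rule cSUP_least[OF A(2)]) (smt (verit) cSUP_upper[OF _ bdd(2)[OF xx(2)]] near)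
      ultimately show "dist (SUP a\<in>A. F (a, x')) (SUP a\<in>A. F (a, x)) < e"
        using \<open>e > 0\<close> by (simp add: dist_real_def)
    qed
  qed
  show "continuous_on X (\<lambda>x. INF a\<in>A. F (a, x))"
    by (rule uniformly_continuous_imp_continuous) (unfold uniformly_continuous_on_def, use close in blast)
  show "continuous_on X (\<lambda>x. SUP a\<in>A. F (a, x))"
    by (rule uniformly_continuous_imp_continuous) (unfold uniformly_continuous_on_def, use close in blast)
qed

lemma profiles_fun_upd:
  "x \<in> profiles n P \<Longrightarrow> i \<in> {1..n} \<Longrightarrow> v \<in> P i \<Longrightarrow> x(i := v) \<in> profiles n P"
  unfolding profiles_def by (auto simp: PiE_def Pi_def extensional_def)

lemma profiles_nonempty: "(\<And>i. i \<in> {1..n} \<Longrightarrow> P i \<noteq> {}) \<Longrightarrow> profiles n P \<noteq> {}"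
  unfolding profiles_def by (simp add: PiE_eq_empty_iff)

lemma compact_profiles:
  fixes P :: "nat \<Rightarrow> 'b::topological_space set"
  assumes "\<And>i. i \<in> {1..n} \<Longrightarrow> compact (P i)"
  shows "compact (profiles n P)"
proof -
  have "profiles n P = PiE UNIV (\<lambda>i. if i \<in> {1..n} then P i else {undefined})"
    unfolding profiles_def by (auto simp: PiE_def Pi_def extensional_def)
  moreover have "compactin (product_topology (\<lambda>i. euclidean) UNIV)
      (PiE UNIV (\<lambda>i. if i \<in> {1..n} then P i else {undefined::'b}))"
    by (subst compactin_PiE) (use assms in auto)
  ultimately show ?thesis by (simp add: euclidean_product_topology)
qed

definition worst_payoff :: "'a set \<Rightarrow> (nat \<Rightarrow> 'a \<Rightarrow> 'x \<Rightarrow> real) \<Rightarrow> nat \<Rightarrow> 'x \<Rightarrow> real" where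
  "worst_payoff P0 J i x = (INF a\<in>P0. J i a x)"

context
  fixes n :: nat and P0 :: "'a::metric_space set" and P :: "nat \<Rightarrow> 'b::metric_space set"
    and J :: "nat \<Rightarrow> 'a \<Rightarrow> (nat \<Rightarrow> 'b) \<Rightarrow> real"
  assumes game: "game n P0 P J"
begin

lemma game_P0: "compact P0" "P0 \<noteq> {}"
  using game by (auto simp: game_def)

lemma game_profiles: "compact (profiles n P)" "profiles n P \<noteq> {}"
  using game by (auto simp: game_def intro!: compact_profiles profiles_nonempty)

lemma game_payoff_continuous:
  "i \<le> n \<Longrightarrow> continuous_on (P0 \<times> profiles n P) (\<lambda>p. J i (fst p) (snd p))"
  using game by (simp add: game_def case_prod_beta')

lemma game_payoff_continuous_leader:
  assumes "i \<le> n" "x \<in> profiles n P"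
  shows "continuous_on P0 (\<lambda>a. J i a x)"
  by (rule continuous_on_compose2[OF game_payoff_continuous[OF assms(1)], of _ "\<lambda>a. (a, x)", simplified])
     (use assms(2) in \<open>auto intro: continuous_intros\<close>)

lemma game_payoff_continuous_followers:
  assumes "i \<le> n" "a \<in> P0"
  shows "continuous_on (profiles n P) (J i a)"
  by (rule continuous_on_compose2[OF game_payoff_continuous[OF assms(1)], of _ "\<lambda>x. (a, x)", simplified])
     (use assms(2) in \<open>auto intro: continuous_intros\<close>)

lemma worst_payoff_attained:
  assumes "i \<le> n" "x \<in> profiles n P"
  obtains a where "a \<in> P0" "worst_payoff P0 J i x = J i a x" "\<And>a'. a' \<in> P0 \<Longrightarrow> J i a x \<le> J i a' x"
proof -
  obtain a where a: "a \<in> P0" "\<And>a'. a' \<in> P0 \<Longrightarrow> J i a x \<le> J i a' x"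
    using continuous_attains_inf[OF game_P0 game_payoff_continuous_leader[OF assms]] by blast
  then have "worst_payoff P0 J i x = J i a x"
    unfolding worst_payoff_def by (intro antisym cINF_lower cINF_greatest) (auto intro!: bdd_belowI2)
  with a that show thesis by blast
qed

lemma worst_payoff_le:
  assumes "i \<le> n" "x \<in> profiles n P" "a \<in> P0"
  shows "worst_payoff P0 J i x \<le> J i a x"
  using worst_payoff_attained[OF assms(1,2)] assms(3) by metis

lemma continuous_on_worst_payoff:
  "i \<le> n \<Longrightarrow> continuous_on (profiles n P) (worst_payoff P0 J i)"
  using continuous_on_INF_SUP_compact(1)[OF game_P0 game_profiles(1)
      game_payoff_continuous]
  by (simp add: worst_payoff_def)

lemma mem_Bset_iff:
  "(u0, u) \<in> Bset n P0 P J \<longleftrightarrow> u0 \<in> P0 \<and> u \<in> profiles n P \<and>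
     (\<forall>i\<in>{1..n}. \<forall>v\<in>P i. worst_payoff P0 J i (u(i := v)) \<le> J i u0 u)"
proof -
  have "(SUP v\<in>P i. worst_payoff P0 J i (u(i := v))) \<le> c \<longleftrightarrow> (\<forall>v\<in>P i. worst_payoff P0 J i (u(i := v)) \<le> c)"
    if "i \<in> {1..n}" "u \<in> profiles n P" for i c
  proof (rule cSUP_le_iff)
    show "P i \<noteq> {}" using game that(1) by (simp add: game_def)
    have "continuous_on (P i) (worst_payoff P0 J i \<circ> (\<lambda>v. u(i := v)))"
      using that profiles_fun_upd[OF that(2) that(1)]
      by (intro continuous_on_compose continuous_on_fun_upd[OF continuous_on_id continuous_on_const]
          continuous_on_subset[OF continuous_on_worst_payoff]) auto
    then have "bounded ((worst_payoff P0 J i \<circ> (\<lambda>v. u(i := v))) ` P i)"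
      using game that(1) by (intro compact_imp_bounded compact_continuous_image) (auto simp: game_def)
    then show "bdd_above ((\<lambda>v. worst_payoff P0 J i (u(i := v))) ` P i)"
      by (simp add: bounded_imp_bdd_above image_comp)
  qed
  then show ?thesis
    unfolding Bset_def worst_payoff_def[symmetric] by auto
qed

lemma Nash_mem_Bset:
  assumes inc: "incentive n P0 P \<beta>" and nash: "w \<in> NashSet n P J \<beta>"
  shows "(\<beta> w, w) \<in> Bset n P0 P J"
proof -
  have w: "w \<in> profiles n P" and bw: "\<beta> w \<in> P0"
    using inc nash by (auto simp: NashSet_def incentive_def)
  have "worst_payoff P0 J i (w(i := v)) \<le> J i (\<beta> w) w" if i: "i \<in> {1..n}" and v: "v \<in> P i" for i v
  proof -
    have wv: "w(i := v) \<in> profiles n P" by (rule profiles_fun_upd[OF w i v])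
    then have "worst_payoff P0 J i (w(i := v)) \<le> J i (\<beta> (w(i := v))) (w(i := v))"
      using inc i by (intro worst_payoff_le) (auto simp: incentive_def)
    also have "\<dots> \<le> J i (\<beta> w) w"
      using nash i v by (auto simp: NashSet_def)
    finally show ?thesis .
  qed
  with w bw show ?thesis by (simp add: mem_Bset_iff)
qed

lemma Bset_sustained_by_threat:
  assumes B: "(w0, w) \<in> Bset n P0 P J"
  obtains \<beta> where "incentive n P0 P \<beta>" "\<beta> w = w0" "w \<in> NashSet n P J \<beta>"
proof -
  have w0: "w0 \<in> P0" and w: "w \<in> profiles n P"
    and wB: "\<And>i v. i \<in> {1..n} \<Longrightarrow> v \<in> P i \<Longrightarrow> worst_payoff P0 J i (w(i := v)) \<le> J i w0 w"
    using B by (auto simp: mem_Bset_iff)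
  define threat where "threat x a \<longleftrightarrow> a \<in> P0 \<and>
      (\<forall>i\<in>{1..n}. x = w(i := x i) \<longrightarrow> J i a x = worst_payoff P0 J i x)" for x a
  define \<beta> where "\<beta> x = (if x = w then w0 else SOME a. threat x a)" for x
  have threat_exists: "\<exists>a. threat x a" if x: "x \<in> profiles n P" "x \<noteq> w" for x
  proof (cases "\<exists>i\<in>{1..n}. x = w(i := x i)")
    case False
    then show ?thesis using game_P0 by (auto simp: threat_def)
  next
    case True
    then obtain i where i: "i \<in> {1..n}" "x = w(i := x i)" by blast
    have deviator_unique: "j = i" if "x = w(j := x j)" for j
      using i(2) that x(2) by (metis fun_upd_other fun_upd_triv fun_upd_upd)
    obtain a where "a \<in> P0" "worst_payoff P0 J i x = J i a x"
      using worst_payoff_attained[of i x] i(1) x(1) by auto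
    then show ?thesis using deviator_unique by (auto simp: threat_def)
  qed
  have \<beta>_threat: "threat x (\<beta> x)" if "x \<in> profiles n P" "x \<noteq> w" for x
    using someI_ex[OF threat_exists[OF that]] that(2) by (simp add: \<beta>_def)
  have "\<beta> x \<in> P0" if "x \<in> profiles n P" for x
    using \<beta>_threat[OF that] w0 unfolding threat_def by (cases "x = w") (auto simp: \<beta>_def)
  then have "incentive n P0 P \<beta>"
    by (simp add: incentive_def)
  moreover have "w \<in> NashSet n P J \<beta>"
    unfolding NashSet_def
  proof (intro CollectI conjI ballI w)
    fix i v assume i: "i \<in> {1..n}" and v: "v \<in> P i"
    show "J i (\<beta> (w(i := v))) (w(i := v)) \<le> J i (\<beta> w) w"
    proof (cases "w(i := v) = w")
      case False
      with \<beta>_threat[OF profiles_fun_upd[OF w i v]]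
      have "J i (\<beta> (w(i := v))) (w(i := v)) = worst_payoff P0 J i (w(i := v))"
        unfolding threat_def using i by (metis fun_upd_same fun_upd_upd)
      also have "\<dots> \<le> J i (\<beta> w) w" using wB[OF i v] by (simp add: \<beta>_def)
      finally show ?thesis .
    qed simp
  qed
  ultimately show thesis using that by (simp add: \<beta>_def)
qed

lemma leader_value_eq_SUP_Bset:
  "(SUP \<beta>\<in>{\<beta>. incentive n P0 P \<beta>}. SUP w\<in>NashSet n P J \<beta>. ereal (J 0 (\<beta> w) w))
     = (SUP p\<in>Bset n P0 P J. ereal (J 0 (fst p) (snd p)))"
proof (rule antisym)
  show "(SUP \<beta>\<in>{\<beta>. incentive n P0 P \<beta>}. SUP w\<in>NashSet n P J \<beta>. ereal (J 0 (\<beta> w) w))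
      \<le> (SUP p\<in>Bset n P0 P J. ereal (J 0 (fst p) (snd p)))"
    by (intro SUP_least) (force intro: SUP_upper2 Nash_mem_Bset)
  show "(SUP p\<in>Bset n P0 P J. ereal (J 0 (fst p) (snd p)))
      \<le> (SUP \<beta>\<in>{\<beta>. incentive n P0 P \<beta>}. SUP w\<in>NashSet n P J \<beta>. ereal (J 0 (\<beta> w) w))"
  proof (intro SUP_least, clarify)
    fix w0 w assume "(w0, w) \<in> Bset n P0 P J"
    then obtain \<beta> where "incentive n P0 P \<beta>" "\<beta> w = w0" "w \<in> NashSet n P J \<beta>"
      by (rule Bset_sustained_by_threat)
    then show "ereal (J 0 (fst (w0, w)) (snd (w0, w)))
        \<le> (SUP \<beta>\<in>{\<beta>. incentive n P0 P \<beta>}. SUP w\<in>NashSet n P J \<beta>. ereal (J 0 (\<beta> w) w))"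
      by (force intro: SUP_upper2)
  qed
qed

lemma inv_stackelberg_maximizes_on_B:
  assumes "inv_stackelberg n P0 P J \<alpha> u"
  shows "maximizes_on_B n P0 P J (\<alpha> u) u"
proof -
  have "(\<alpha> u, u) \<in> Bset n P0 P J"
    using assms Nash_mem_Bset by (simp add: inv_stackelberg_def)
  moreover have "ereal (J 0 w0 w) \<le> ereal (J 0 (\<alpha> u) u)" if "(w0, w) \<in> Bset n P0 P J" for w0 w
    using assms that by (force simp: inv_stackelberg_def leader_value_eq_SUP_Bset intro: SUP_upper2)
  ultimately show ?thesis by (auto simp: maximizes_on_B_def)
qed

lemma maximizes_on_B_inv_stackelberg:
  assumes "maximizes_on_B n P0 P J u0 u"
  obtains \<alpha> where "\<alpha> u = u0" "inv_stackelberg n P0 P J \<alpha> u"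
proof -
  have B: "(u0, u) \<in> Bset n P0 P J"
    using assms by (simp add: maximizes_on_B_def)
  obtain \<alpha> where \<alpha>: "incentive n P0 P \<alpha>" "\<alpha> u = u0" "u \<in> NashSet n P J \<alpha>"
    using Bset_sustained_by_threat[OF B] .
  have "(SUP p\<in>Bset n P0 P J. ereal (J 0 (fst p) (snd p))) = ereal (J 0 u0 u)"
    using assms B by (intro antisym SUP_least SUP_upper2) (auto simp: maximizes_on_B_def)
  with \<alpha> show thesis
    using that by (simp add: inv_stackelberg_def leader_value_eq_SUP_Bset)
qed

lemma compact_Bset: "compact (Bset n P0 P J)"
proof -
  let ?X = "P0 \<times> profiles n P"
  define g where "g iv p = J (fst iv) (fst p) (snd p) - worst_payoff P0 J (fst iv) ((snd p)(fst iv := snd iv))"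
    for iv p
  have "continuous_on ?X (g iv)" if iv: "iv \<in> Sigma {1..n} P" for iv
    unfolding g_def using iv profiles_fun_upd[of _ n P "fst iv" "snd iv"]
    by (intro continuous_on_diff game_payoff_continuous
        continuous_on_compose2[OF continuous_on_worst_payoff] continuous_intros) auto
  moreover have "closed ?X"
    using game_P0 game_profiles by (intro compact_imp_closed compact_Times)
  ultimately have closed_pre: "closed (?X \<inter> g iv -` {0..})" if "iv \<in> Sigma {1..n} P" for iv
    using that by (intro continuous_closed_preimage) auto
  have "Bset n P0 P J = ?X \<inter> (\<Inter>iv\<in>Sigma {1..n} P. ?X \<inter> g iv -` {0..})"
    unfolding set_eq_iff by (force simp: mem_Bset_iff g_def)
  also have "compact \<dots>"
    using game_P0 game_profiles closed_pre
    by (intro compact_Int_closed compact_Times closed_INT ballI)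
  finally show ?thesis .
qed

end

lemma profile_combination_map:
  fixes Q :: "nat \<Rightarrow> 'd::real_normed_vector set" and z :: "nat \<Rightarrow> nat \<Rightarrow> 'd"
  assumes convex: "\<And>i. i \<in> {1..m} \<Longrightarrow> convex (Q i)"
    and N: "0 < N" and z: "\<And>k. k < N \<Longrightarrow> z k \<in> profiles m Q"
  obtains x where "continuous_on (unit_cube N) x" "\<And>t. t \<in> unit_cube N \<Longrightarrow> x t \<in> profiles m Q"
    "\<And>t j. t \<in> unit_cube N \<Longrightarrow> (\<Sum>k<N. t k) = 1 \<Longrightarrow> j \<in> {1..m} \<Longrightarrow> x t j = (\<Sum>k<N. t k *\<^sub>R z k j)"
proof -
  \<comment> \<open>weights with sum at most one; the missing mass goes to \<open>z 0\<close>\<close>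
  define comb where "comb l = (\<lambda>j. if j \<in> {1..m}
      then (\<Sum>k<N. l k *\<^sub>R z k j) + (1 - (\<Sum>k<N. l k)) *\<^sub>R z 0 j else undefined)" for l :: "nat \<Rightarrow> real"
  have comb_mem: "comb l \<in> profiles m Q" if l: "\<And>k. 0 \<le> l k" "(\<Sum>k<N. l k) \<le> 1" for l
  proof -
    have "comb l j \<in> Q j" if j: "j \<in> {1..m}" for j
    proof -
      define a where "a k = (if k < N then l k else 1 - (\<Sum>k<N. l k))" for k
      define y where "y k = (if k < N then z k j else z 0 j)" for k
      have "(\<Sum>k<Suc N. a k *\<^sub>R y k) \<in> Q j"
      proof (rule convex_sum)
        show "y k \<in> Q j" if "k \<in> {..<Suc N}" for k
          using z[of k] z[OF N] j by (auto simp: y_def profiles_def PiE_iff)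
      qed (use convex[OF j] l in \<open>auto simp: a_def\<close>)
      moreover have "(\<Sum>k<Suc N. a k *\<^sub>R y k) = comb l j"
        using j by (simp add: a_def y_def comb_def)
      ultimately show ?thesis by simp
    qed
    then show ?thesis by (simp add: profiles_def comb_def PiE_iff extensional_def)
  qed
  define scale where "scale t = (\<lambda>k. t k / max 1 (\<Sum>j<N. t j))" for t :: "nat \<Rightarrow> real"
  have scale_simplex: "(\<forall>k. 0 \<le> scale t k) \<and> (\<Sum>k<N. scale t k) \<le> 1" if "t \<in> unit_cube N" for t
  proof -
    have "0 \<le> t k" for k using that by (cases "k < N") (auto simp: unit_cube_def)
    moreover have "(\<Sum>k<N. scale t k) = (\<Sum>k<N. t k) / max 1 (\<Sum>j<N. t j)"
      by (simp add: scale_def sum_divide_distrib)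
    ultimately show ?thesis by (simp add: scale_def divide_le_eq_1 less_max_iff_disj)
  qed
  show thesis
  proof
    have "continuous_on UNIV comb"
    proof (intro continuous_on_coordinatewise_then_product)
      fix j
      show "continuous_on UNIV (\<lambda>l. comb l j)"
        by (cases "j \<in> {1..m}") (simp_all add: comb_def continuous_intros del: atLeastAtMost_iff)
    qed
    moreover have "continuous_on UNIV scale"
      by (intro continuous_on_coordinatewise_then_product) (auto simp: scale_def intro!: continuous_intros)
    ultimately show "continuous_on (unit_cube N) (\<lambda>t. comb (scale t))"
      by (metis continuous_on_compose2 continuous_on_subset subset_UNIV)
    show "comb (scale t) \<in> profiles m Q" if "t \<in> unit_cube N" for t
      using scale_simplex[OF that] by (simp add: comb_mem)
    show "comb (scale t) j = (\<Sum>k<N. t k *\<^sub>R z k j)" if "(\<Sum>k<N. t k) = 1" "j \<in> {1..m}" for t j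
      using that by (simp add: scale_def comb_def)
  qed
qed

lemma partition_of_unity_fixed_point:
  fixes Q :: "nat \<Rightarrow> 'd::real_normed_vector set" and z :: "nat \<Rightarrow> nat \<Rightarrow> 'd"
    and \<psi> :: "nat \<Rightarrow> (nat \<Rightarrow> 'd) \<Rightarrow> real"
  assumes convex: "\<And>i. i \<in> {1..m} \<Longrightarrow> convex (Q i)"
    and N: "0 < N" and z: "\<And>k. k < N \<Longrightarrow> z k \<in> profiles m Q"
    and \<psi>_cont: "\<And>k. k < N \<Longrightarrow> continuous_on (profiles m Q) (\<psi> k)"
    and \<psi>_nonneg: "\<And>k x. k < N \<Longrightarrow> x \<in> profiles m Q \<Longrightarrow> 0 \<le> \<psi> k x"
    and \<psi>_pos: "\<And>x. x \<in> profiles m Q \<Longrightarrow> \<exists>k<N. 0 < \<psi> k x"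
  obtains x t where "x \<in> profiles m Q" "\<And>k. 0 \<le> t k" "(\<Sum>k<N. t k) = 1"
    "\<And>k. k < N \<Longrightarrow> 0 < t k \<Longrightarrow> 0 < \<psi> k x"
    "\<And>j. j \<in> {1..m} \<Longrightarrow> x j = (\<Sum>k<N. t k *\<^sub>R z k j)"
proof -
  let ?X = "profiles m Q"
  obtain x where x_cont: "continuous_on (unit_cube N) x" and x_mem: "\<And>t. t \<in> unit_cube N \<Longrightarrow> x t \<in> ?X"
    and x_eq: "\<And>t j. t \<in> unit_cube N \<Longrightarrow> (\<Sum>k<N. t k) = 1 \<Longrightarrow> j \<in> {1..m} \<Longrightarrow> x t j = (\<Sum>k<N. t k *\<^sub>R z k j)"
    by (rule profile_combination_map[where m = m and Q = Q and N = N and z = z]) (use convex N z in auto)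
  define S where "S y = (\<Sum>k<N. \<psi> k y)" for y
  have S_pos: "0 < S y" if "y \<in> ?X" for y
    using \<psi>_pos[OF that] \<psi>_nonneg[OF _ that] unfolding S_def by (metis lessThan_iff sum_pos2 finite_lessThan)
  define \<Phi> where "\<Phi> t = (\<lambda>k. if k < N then \<psi> k (x t) / S (x t) else 0)" for t
  have "\<Phi> ` unit_cube N \<subseteq> unit_cube N"
  proof clarify
    fix t assume t: "t \<in> unit_cube N"
    have "\<psi> k (x t) \<le> S (x t)" if "k < N" for k
      unfolding S_def using that \<psi>_nonneg[OF _ x_mem[OF t]] by (intro member_le_sum) auto
    then show "\<Phi> t \<in> unit_cube N"
      using S_pos[OF x_mem[OF t]] \<psi>_nonneg[OF _ x_mem[OF t]] by (auto simp: unit_cube_def \<Phi>_def)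
  qed
  moreover have "continuous_on (unit_cube N) \<Phi>"
  proof (intro continuous_on_coordinatewise_then_product)
    fix k
    have "continuous_on (unit_cube N) (\<lambda>t. \<psi> k (x t) / S (x t))" if "k < N"
      unfolding S_def using that x_mem S_pos[OF x_mem]
      by (intro continuous_intros continuous_on_compose2[OF \<psi>_cont x_cont]) (force simp: S_def)+
    then show "continuous_on (unit_cube N) (\<lambda>t. \<Phi> t k)"
      by (cases "k < N") (auto simp: \<Phi>_def)
  qed
  ultimately obtain t where t: "t \<in> unit_cube N" "\<Phi> t = t"
    using brouwer_unit_cube by blast
  have t_eq: "t k = \<psi> k (x t) / S (x t)" if "k < N" for k
    using fun_cong[OF t(2), of k] that by (simp add: \<Phi>_def)
  have sum_t: "(\<Sum>k<N. t k) = 1"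
    using S_pos[OF x_mem[OF t(1)]] by (simp add: t_eq sum_divide_distrib[symmetric] S_def)
  show thesis
  proof (rule that)
    show "x t \<in> ?X" by (rule x_mem[OF t(1)])
    show "0 \<le> t k" for k using t(1) by (cases "k < N") (auto simp: unit_cube_def)
    show "(\<Sum>k<N. t k) = 1" by (rule sum_t)
    show "0 < \<psi> k (x t)" if "k < N" "0 < t k" for k
      using that S_pos[OF x_mem[OF t(1)]] by (simp add: t_eq zero_less_divide_iff)
    show "x t j = (\<Sum>k<N. t k *\<^sub>R z k j)" if "j \<in> {1..m}" for j
      by (rule x_eq[OF t(1) sum_t that])
  qed
qed

lemma quasiconcave_on_superlevel_convex:
  assumes "convex S" "quasiconcave_on S f"
  shows "convex {x \<in> S. c \<le> f x}"
  unfolding convex_def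
proof (intro ballI allI impI)
  fix x y and u v :: real
  assume x: "x \<in> {x \<in> S. c \<le> f x}" and y: "y \<in> {x \<in> S. c \<le> f x}" and uv: "0 \<le> u" "0 \<le> v" "u + v = 1"
  have "min (f x) (f y) \<le> f ((1 - v) *\<^sub>R x + v *\<^sub>R y)"
    using assms(2) x y uv unfolding quasiconcave_on_def by auto
  moreover have "u = 1 - v" using uv by simp
  ultimately have "c \<le> f (u *\<^sub>R x + v *\<^sub>R y)"
    using x y min.bounded_iff order.trans by fastforce
  then show "u *\<^sub>R x + v *\<^sub>R y \<in> {x \<in> S. c \<le> f x}"
    using assms(1) x y uv unfolding convex_def by auto
qed

lemma best_replies_locally_eps_optimal:
  fixes Q :: "nat \<Rightarrow> 'd::real_normed_vector set" and G :: "nat \<Rightarrow> (nat \<Rightarrow> 'd) \<Rightarrow> real"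
  assumes Q: "\<And>i. i \<in> {1..m} \<Longrightarrow> compact (Q i) \<and> Q i \<noteq> {}"
    and G: "\<And>i. i \<in> {1..m} \<Longrightarrow> continuous_on (profiles m Q) (G i)"
    and e: "0 < e" and y: "y \<in> profiles m Q"
  obtains b r where "b \<in> profiles m Q" "0 < r"
    "\<forall>x\<in>profiles m Q. dist x y < r \<longrightarrow> (\<forall>i\<in>{1..m}. \<forall>v\<in>Q i. G i (x(i := v)) < G i (x(i := b i)) + e)"
proof -
  let ?X = "profiles m Q"
  have X: "compact ?X"
    using Q by (auto intro!: compact_profiles)
  define M where "M i x = (SUP v\<in>Q i. G i (x(i := v)))" for i x
  have G_upd_cont: "continuous_on (Q i) (\<lambda>v. G i (x(i := v)))" if "x \<in> ?X" "i \<in> {1..m}" for x i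
    by (rule continuous_on_compose2[OF G[OF that(2)]])
       (auto intro!: continuous_on_fun_upd[OF continuous_on_id continuous_on_const]
         simp: profiles_fun_upd[OF that])
  have M_cont: "continuous_on ?X (M i)" if i: "i \<in> {1..m}" for i
  proof -
    have "continuous_on (Q i \<times> ?X) (\<lambda>p. G i ((snd p)(i := fst p)))"
      by (rule continuous_on_compose2[OF G[OF i]])
         (auto intro!: continuous_on_fun_upd continuous_on_fst continuous_on_snd continuous_on_id
           simp: profiles_fun_upd[OF _ i])
    from continuous_on_INF_SUP_compact(2)[OF _ _ X this] show ?thesis
      using Q[OF i] by (simp add: M_def)
  qed
  have M_ge: "G i (x(i := v)) \<le> M i x" if "x \<in> ?X" "i \<in> {1..m}" "v \<in> Q i" for x i v
  proof -
    have "bounded ((\<lambda>v. G i (x(i := v))) ` Q i)"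
      using Q[OF that(2)] by (intro compact_imp_bounded compact_continuous_image G_upd_cont[OF that(1,2)]) auto
    then show ?thesis
      unfolding M_def using that(3) by (intro cSUP_upper bounded_imp_bdd_above)
  qed
  have "\<exists>w\<in>Q i. M i y = G i (y(i := w))" if i: "i \<in> {1..m}" for i
  proof -
    obtain w where "w \<in> Q i" "\<And>v. v \<in> Q i \<Longrightarrow> G i (y(i := v)) \<le> G i (y(i := w))"
      using continuous_attains_sup[OF _ _ G_upd_cont[OF y i]] Q[OF i] by blast
    then show ?thesis
      using M_ge[OF y i] Q[OF i] unfolding M_def by (intro bexI[of _ w] antisym cSUP_least) auto
  qed
  then obtain best where best: "\<And>i. i \<in> {1..m} \<Longrightarrow> best i \<in> Q i \<and> M i y = G i (y(i := best i))"
    by metis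
  define b where "b = restrict best {1..m}"
  have b: "b \<in> ?X" using best by (auto simp: b_def profiles_def)
  have "eventually (\<lambda>x. M i x - G i (x(i := b i)) < e) (at y within ?X)" if i: "i \<in> {1..m}" for i
  proof (rule order_tendstoD(2))
    have "continuous_on ?X (\<lambda>x. M i x - G i (x(i := b i)))"
      using b i
      by (intro continuous_intros M_cont continuous_on_compose2[OF G[OF i]])
         (auto simp: profiles_fun_upd PiE_iff profiles_def)
    then show "((\<lambda>x. M i x - G i (x(i := b i))) \<longlongrightarrow> M i y - G i (y(i := b i))) (at y within ?X)"
      using y by (simp add: continuous_on_def)
    show "M i y - G i (y(i := b i)) < e"
      using best[OF i] e i by (simp add: b_def)
  qed
  then have "eventually (\<lambda>x. \<forall>i\<in>{1..m}. M i x - G i (x(i := b i)) < e) (at y within ?X)"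
    by (simp add: eventually_ball_finite)
  then obtain r where r: "r > 0"
    "\<And>x. x \<in> ?X \<Longrightarrow> x \<noteq> y \<Longrightarrow> dist x y < r \<Longrightarrow> \<forall>i\<in>{1..m}. M i x - G i (x(i := b i)) < e"
    unfolding eventually_at by blast
  have "M i y - G i (y(i := b i)) < e" if "i \<in> {1..m}" for i
    using best[OF that] e that by (simp add: b_def)
  with r(2) have "\<forall>i\<in>{1..m}. M i x - G i (x(i := b i)) < e" if "x \<in> ?X" "dist x y < r" for x
    using that by (cases "x = y") auto
  then show thesis
    using that[OF b r(1)] M_ge by fastforce
qed

lemma approximate_Nash_equilibrium:
  fixes Q :: "nat \<Rightarrow> 'd::real_normed_vector set" and G :: "nat \<Rightarrow> (nat \<Rightarrow> 'd) \<Rightarrow> real"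
  assumes Q: "\<And>i. i \<in> {1..m} \<Longrightarrow> compact (Q i) \<and> Q i \<noteq> {} \<and> convex (Q i)"
    and G: "\<And>i. i \<in> {1..m} \<Longrightarrow> continuous_on (profiles m Q) (G i)"
    and qc: "\<And>i w. i \<in> {1..m} \<Longrightarrow> w \<in> profiles m Q \<Longrightarrow> quasiconcave_on (Q i) (\<lambda>v. G i (w(i := v)))"
    and e: "0 < e"
  shows "\<exists>x\<in>profiles m Q. \<forall>i\<in>{1..m}. \<forall>v\<in>Q i. G i (x(i := v)) \<le> G i x + e"
proof -
  let ?X = "profiles m Q"
  have X: "compact ?X" "?X \<noteq> {}"
    using Q by (auto intro!: compact_profiles profiles_nonempty)
  have "\<exists>b r. b \<in> ?X \<and> 0 < r \<and>
      (\<forall>x\<in>?X. dist x y < r \<longrightarrow> (\<forall>i\<in>{1..m}. \<forall>v\<in>Q i. G i (x(i := v)) < G i (x(i := b i)) + e))"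
    if "y \<in> ?X" for y
    by (rule best_replies_locally_eps_optimal[where m = m and Q = Q and G = G and e = e and y = y])
       (use Q G e that in blast)+
  then obtain reply r where reply: "\<And>y. y \<in> ?X \<Longrightarrow> reply y \<in> ?X" and r: "\<And>y. y \<in> ?X \<Longrightarrow> 0 < r y"
    and eps_optimal: "\<And>x y i v. y \<in> ?X \<Longrightarrow> x \<in> ?X \<Longrightarrow> dist x y < r y \<Longrightarrow> i \<in> {1..m} \<Longrightarrow> v \<in> Q i \<Longrightarrow>
      G i (x(i := v)) < G i (x(i := reply y i)) + e"
    by metis
  obtain D where D: "D \<subseteq> ?X" "finite D" "?X \<subseteq> (\<Union>y\<in>D. ball y (r y))"
    using compactE_image[OF X(1), of ?X "\<lambda>y. ball y (r y)"] r by force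
  obtain h where h: "bij_betw h {0..<card D} D"
    using ex_bij_betw_nat_finite[OF D(2)] by blast
  have cover: "\<exists>k<card D. dist x (h k) < r (h k)" if x: "x \<in> ?X" for x
  proof -
    obtain y where "y \<in> D" "dist x y < r y"
      using D(3) x by (force simp: dist_commute)
    with h show ?thesis by (force simp: bij_betw_def)
  qed
  have hD: "h k \<in> ?X" if "k < card D" for k
    using h D(1) that by (auto simp: bij_betw_def)
  have N: "card D > 0" using cover X(2) by force
  obtain x t where x: "x \<in> ?X" and t: "\<And>k. 0 \<le> t k" "(\<Sum>k<card D. t k) = 1"
    and t_pos: "\<And>k. k < card D \<Longrightarrow> 0 < t k \<Longrightarrow> 0 < max 0 (r (h k) - dist x (h k))"
    and x_eq: "\<And>j. j \<in> {1..m} \<Longrightarrow> x j = (\<Sum>k<card D. t k *\<^sub>R reply (h k) j)"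
    by (rule partition_of_unity_fixed_point[of m Q "card D" "\<lambda>k. reply (h k)" "\<lambda>k y. max 0 (r (h k) - dist y (h k))"])
       (use Q N reply hD cover in \<open>force intro!: continuous_intros\<close>)+
  show ?thesis
  proof (intro bexI[OF _ x] ballI)
    fix i v assume i: "i \<in> {1..m}" and v: "v \<in> Q i"
    let ?L = "\<Inter>v\<in>Q i. {w \<in> Q i. G i (x(i := v)) - e \<le> G i (x(i := w))}"
    let ?A = "{k. k < card D \<and> 0 < t k}"
    have sum_A: "(\<Sum>k\<in>?A. f k) = (\<Sum>k<card D. f k)" if "\<And>k. t k = 0 \<Longrightarrow> f k = 0"
      for f :: "nat \<Rightarrow> 'b::comm_monoid_add"
      using that t(1) by (intro sum.mono_neutral_left) (auto simp: order.strict_iff_order)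
    have "reply (h k) i \<in> ?L" if "k \<in> ?A" for k
      using that t_pos[of k] eps_optimal[OF hD x _ i] reply[OF hD, of k] i
      by (fastforce simp: profiles_def PiE_iff less_max_iff_disj)
    moreover have "(\<Sum>k\<in>?A. t k) = 1"
      using t(2) by (simp add: sum_A)
    moreover have "convex ?L"
      using quasiconcave_on_superlevel_convex[OF _ qc[OF i x]] Q[OF i] by (intro convex_INT) auto
    ultimately have "(\<Sum>k\<in>?A. t k *\<^sub>R reply (h k) i) \<in> ?L"
      using t(1) by (intro convex_sum) auto
    moreover have "x i = (\<Sum>k\<in>?A. t k *\<^sub>R reply (h k) i)"
      using x_eq[OF i] by (simp add: sum_A)
    ultimately have "x i \<in> ?L" by simp
    then show "G i (x(i := v)) \<le> G i x + e"
      using v by force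
  qed
qed

theorem Nash_equilibrium_exists:
  fixes Q :: "nat \<Rightarrow> 'd::real_normed_vector set" and G :: "nat \<Rightarrow> (nat \<Rightarrow> 'd) \<Rightarrow> real"
  assumes Q: "\<And>i. i \<in> {1..m} \<Longrightarrow> compact (Q i) \<and> Q i \<noteq> {} \<and> convex (Q i)"
    and G: "\<And>i. i \<in> {1..m} \<Longrightarrow> continuous_on (profiles m Q) (G i)"
    and qc: "\<And>i w. i \<in> {1..m} \<Longrightarrow> w \<in> profiles m Q \<Longrightarrow> quasiconcave_on (Q i) (\<lambda>v. G i (w(i := v)))"
  shows "\<exists>x\<in>profiles m Q. \<forall>i\<in>{1..m}. \<forall>v\<in>Q i. G i (x(i := v)) \<le> G i x"
proof -
  let ?X = "profiles m Q"
  have "\<exists>x\<in>?X. \<forall>i\<in>{1..m}. \<forall>v\<in>Q i. G i (x(i := v)) \<le> G i x + 1 / real (Suc k)" for k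
    by (rule approximate_Nash_equilibrium[of m Q G]) (use Q G qc in auto)
  then obtain xs where xs: "\<And>k. xs k \<in> ?X"
    "\<And>k i v. i \<in> {1..m} \<Longrightarrow> v \<in> Q i \<Longrightarrow> G i ((xs k)(i := v)) \<le> G i (xs k) + 1 / real (Suc k)"
    by metis
  have "compact ?X" using Q by (auto intro!: compact_profiles)
  then obtain x \<sigma> where x: "x \<in> ?X" "strict_mono \<sigma>" "(xs \<circ> \<sigma>) \<longlonglongrightarrow> x"
    using compact_imp_seq_compact xs(1) seq_compactE by metis
  show ?thesis
  proof (intro bexI[OF _ x(1)] ballI)
    fix i v assume i: "i \<in> {1..m}" and v: "v \<in> Q i"
    have lim: "(\<lambda>k. xs (\<sigma> k)) \<longlonglongrightarrow> x" "\<forall>\<^sub>F k in sequentially. xs (\<sigma> k) \<in> ?X"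
      using x(3) xs(1) by (simp_all add: o_def always_eventually)
    have "continuous_on ?X (\<lambda>y. G i (y(i := v)))"
      by (rule continuous_on_compose2[OF G[OF i]])
         (auto intro!: continuous_on_fun_upd[OF continuous_on_const continuous_on_id]
           simp: profiles_fun_upd[where n = m and P = Q, OF _ i v])
    from continuous_on_tendsto_compose[OF this lim(1) x(1) lim(2)]
    have "(\<lambda>k. G i ((xs (\<sigma> k))(i := v))) \<longlonglongrightarrow> G i (x(i := v))" .
    moreover have "(\<lambda>k. G i (xs (\<sigma> k)) + 1 / real (Suc (\<sigma> k))) \<longlonglongrightarrow> G i x + 0"
      by (intro tendsto_add continuous_on_tendsto_compose[OF G[OF i] lim(1) x(1) lim(2)]
          LIMSEQ_inverse_Suc_subseq[OF x(2)])
    ultimately have "G i (x(i := v)) \<le> G i x + 0"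
      by (rule LIMSEQ_le) (use xs(2)[OF i v] in blast)
    then show "G i (x(i := v)) \<le> G i x" by simp
  qed
qed

lemma inv_stackelberg_exists:
  fixes Q0 :: "'c::metric_space set" and Q :: "nat \<Rightarrow> 'd::real_normed_vector set"
    and K :: "nat \<Rightarrow> 'c \<Rightarrow> (nat \<Rightarrow> 'd) \<Rightarrow> real"
  assumes game: "game m Q0 Q K" and convex: "\<And>i. i \<in> {1..m} \<Longrightarrow> convex (Q i)"
    and qc: "\<And>i v0 w. i \<in> {1..m} \<Longrightarrow> v0 \<in> Q0 \<Longrightarrow> w \<in> profiles m Q \<Longrightarrow>
      quasiconcave_on (Q i) (\<lambda>v. K i v0 (w(i := v)))"
  obtains \<alpha> u where "inv_stackelberg m Q0 Q K \<alpha> u"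
proof -
  obtain c where c: "c \<in> Q0" using game_P0[OF game] by blast
  have Q: "compact (Q i) \<and> Q i \<noteq> {} \<and> convex (Q i)" if "i \<in> {1..m}" for i
    using game convex that by (simp add: game_def)
  have K: "continuous_on (profiles m Q) (K i c)" if "i \<in> {1..m}" for i
    using game_payoff_continuous_followers[OF game _ c] that by simp
  have "\<exists>x\<in>profiles m Q. \<forall>i\<in>{1..m}. \<forall>v\<in>Q i. K i c (x(i := v)) \<le> K i c x"
    by (rule Nash_equilibrium_exists[of m Q "\<lambda>i. K i c"]) (use Q K qc c in auto)
  then obtain x where x: "x \<in> profiles m Q" "\<forall>i\<in>{1..m}. \<forall>v\<in>Q i. K i c (x(i := v)) \<le> K i c x"
    by blast
  have "worst_payoff Q0 K i (x(i := v)) \<le> K i c x" if i: "i \<in> {1..m}" and v: "v \<in> Q i" for i v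
    using worst_payoff_le[OF game _ profiles_fun_upd[OF x(1) i v] c] x(2) i v by force
  then have "(c, x) \<in> Bset m Q0 Q K"
    by (simp add: mem_Bset_iff[OF game] c x(1))
  moreover have "continuous_on (Bset m Q0 Q K) (\<lambda>p. K 0 (fst p) (snd p))"
    by (rule continuous_on_subset[OF game_payoff_continuous[OF game]]) (auto simp: Bset_def)
  ultimately obtain p where "p \<in> Bset m Q0 Q K"
    "\<And>q. q \<in> Bset m Q0 Q K \<Longrightarrow> K 0 (fst q) (snd q) \<le> K 0 (fst p) (snd p)"
    using continuous_attains_sup[OF compact_Bset[OF game]] by blast
  then have "maximizes_on_B m Q0 Q K (fst p) (snd p)"
    by (auto simp: maximizes_on_B_def)
  then obtain \<alpha> where "inv_stackelberg m Q0 Q K \<alpha> (snd p)"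
    by (rule maximizes_on_B_inv_stackelberg[OF game])
  then show thesis by (rule that)
qed

theorem theorem2:
  fixes n :: nat and P0 :: "'a::metric_space set" and P :: "nat \<Rightarrow> 'b::metric_space set"
    and J :: "nat \<Rightarrow> 'a \<Rightarrow> (nat \<Rightarrow> 'b) \<Rightarrow> real"
    and m :: nat and Q0 :: "'c::metric_space set" and Q :: "nat \<Rightarrow> 'd::euclidean_space set"
    and K :: "nat \<Rightarrow> 'c \<Rightarrow> (nat \<Rightarrow> 'd) \<Rightarrow> real"
  shows "(game n P0 P J \<longrightarrow>
            (\<forall>\<alpha> u. inv_stackelberg n P0 P J \<alpha> u \<longrightarrow> maximizes_on_B n P0 P J (\<alpha> u) u))
       \<and> (game n P0 P J \<longrightarrow>
            (\<forall>u0 u. maximizes_on_B n P0 P J u0 u \<longrightarrow>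
               (\<exists>\<alpha>. \<alpha> u = u0 \<and> inv_stackelberg n P0 P J \<alpha> u)))
       \<and> (game m Q0 Q K \<and> (\<forall>i\<in>{1..m}. convex (Q i)) \<and>
           (\<forall>i\<in>{1..m}. \<forall>v0\<in>Q0. \<forall>w\<in>profiles m Q.
              quasiconcave_on (Q i) (\<lambda>v. K i v0 (w(i := v))))
           \<longrightarrow> (\<exists>\<alpha> u. inv_stackelberg m Q0 Q K \<alpha> u))"
proof (intro conjI impI allI)
  fix \<alpha> u assume "game n P0 P J" "inv_stackelberg n P0 P J \<alpha> u"
  then show "maximizes_on_B n P0 P J (\<alpha> u) u"
    by (rule inv_stackelberg_maximizes_on_B)
next
  fix u0 u assume "game n P0 P J" "maximizes_on_B n P0 P J u0 u"
  then show "\<exists>\<alpha>. \<alpha> u = u0 \<and> inv_stackelberg n P0 P J \<alpha> u"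
    by (metis maximizes_on_B_inv_stackelberg)
next
  assume "game m Q0 Q K \<and> (\<forall>i\<in>{1..m}. convex (Q i)) \<and>
    (\<forall>i\<in>{1..m}. \<forall>v0\<in>Q0. \<forall>w\<in>profiles m Q. quasiconcave_on (Q i) (\<lambda>v. K i v0 (w(i := v))))"
  then show "\<exists>\<alpha> u. inv_stackelberg m Q0 Q K \<alpha> u"
    by (metis inv_stackelberg_exists)
qed

end
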